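(* Let $k$ be an infinite field, let $\Gamma$ be a finite simplicial complex of dimension $d-1$, and let $S_1,\ldots,S_d$ be subsets of the vertex set of $\Gamma$. Then there is an l.s.o.p. $\theta_1,\ldots,\theta_d$ for the face ring $k[\Gamma]$ with $\mathrm{supp}(\theta_i)=S_i$ for $1\le i\le d$ if and only if, for every face $F\in\Gamma$, $|\{i: S_i\cap F\ne\emptyset\}|\ge|F|$.
   Context: $k[\Gamma]$ is the face ring: the polynomial ring in variables $x_w$ indexed by the vertices of $\Gamma$ modulo the monomials $x^F=\prod_{w\in F}x_w$ for non-faces $F$, graded by degree. The support of a degree-one element $\theta=\sum a_wx_w$ is $\{w:a_w\ne0\}$. An l.s.o.p. for $k[\Gamma]$ (Krull dimension $d$) is a sequence of $d$ degree-one elements $\theta_1,\ldots,\theta_d$ such that $k[\Gamma]/(\theta_1,\ldots,\theta_d)$ is finite-dimensional over $k$. *)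

theory Defs
  imports "HOL-Library.Poly_Mapping"
begin

type_synonym ('v, 'k) mpoly = "('v \<Rightarrow>\<^sub>0 nat) \<Rightarrow>\<^sub>0 'k"

definition simplicial_complex :: "'v set set \<Rightarrow> bool" where
  "simplicial_complex \<Gamma> \<longleftrightarrow> finite \<Gamma> \<and> \<Gamma> \<noteq> {} \<and> (\<forall>F\<in>\<Gamma>. finite F) \<and>
     (\<forall>F\<in>\<Gamma>. \<forall>G. G \<subseteq> F \<longrightarrow> G \<in> \<Gamma>)"

definition vertices :: "'v set set \<Rightarrow> 'v set" where
  "vertices \<Gamma> = \<Union>\<Gamma>"

(* dim \<Gamma> = d - 1 means the maximal face cardinality is d. *)
definition face_card_max :: "'v set set \<Rightarrow> nat" where
  "face_card_max \<Gamma> = Max (card ` \<Gamma>)"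

definition poly_ring :: "'v set \<Rightarrow> ('v, 'k::comm_ring_1) mpoly set" where
  "poly_ring V = {p :: ('v, 'k) mpoly. \<forall>m\<in>Poly_Mapping.keys p. Poly_Mapping.keys m \<subseteq> V}"

definition ideal_gen :: "('v, 'k::comm_ring_1) mpoly set \<Rightarrow> ('v, 'k) mpoly set \<Rightarrow> ('v, 'k) mpoly set" where
  "ideal_gen R G = {\<Sum>g\<in>A. q g * g | A q. finite A \<and> A \<subseteq> G \<and> (\<forall>g\<in>A. q g \<in> R)}"

definition var :: "'v \<Rightarrow> ('v, 'k::comm_ring_1) mpoly" where
  "var w = Poly_Mapping.single (Poly_Mapping.single w 1) 1"

definition const :: "'k::comm_ring_1 \<Rightarrow> ('v, 'k) mpoly" where
  "const c = Poly_Mapping.single 0 c"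

definition monom_set :: "'v set \<Rightarrow> ('v, 'k::comm_ring_1) mpoly" where
  "monom_set F = (\<Prod>w\<in>F. var w)"

definition SR_ideal :: "'v set set \<Rightarrow> ('v, 'k::comm_ring_1) mpoly set" where
  "SR_ideal \<Gamma> = ideal_gen (poly_ring (vertices \<Gamma>))
      {monom_set F | F. F \<subseteq> vertices \<Gamma> \<and> F \<notin> \<Gamma>}"

definition lin_form :: "'v set \<Rightarrow> ('v \<Rightarrow> 'k::comm_ring_1) \<Rightarrow> ('v, 'k) mpoly" where
  "lin_form V a = (\<Sum>w\<in>V. const (a w) * var w)"

definition supp :: "'v set \<Rightarrow> ('v \<Rightarrow> 'k::comm_ring_1) \<Rightarrow> 'v set" where
  "supp V a = {w\<in>V. a w \<noteq> 0}"

(* R / J is finite-dimensional over k: finitely many elements of R span R modulo J. *)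
definition fin_dim_quot :: "('v, 'k::comm_ring_1) mpoly set \<Rightarrow> ('v, 'k) mpoly set \<Rightarrow> bool" where
  "fin_dim_quot R J \<longleftrightarrow> (\<exists>B. finite B \<and> B \<subseteq> R \<and>
      (\<forall>p\<in>R. \<exists>c. p - (\<Sum>b\<in>B. const (c b) * b) \<in> J))"

(* \<theta>_0,...,\<theta>_{d-1} (given by coefficient vectors a i) form an l.s.o.p. for k[\<Gamma>]:
  k[x_V] / (I_\<Gamma> + (\<theta>_i)) is finite dimensional. *)
definition is_lsop :: "'v set set \<Rightarrow> nat \<Rightarrow> (nat \<Rightarrow> 'v \<Rightarrow> 'k::comm_ring_1) \<Rightarrow> bool" where
  "is_lsop \<Gamma> d a \<longleftrightarrow>
     fin_dim_quot (poly_ring (vertices \<Gamma>))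
       (ideal_gen (poly_ring (vertices \<Gamma>))
          ({monom_set F | F. F \<subseteq> vertices \<Gamma> \<and> F \<notin> \<Gamma>} \<union>
           {lin_form (vertices \<Gamma>) (a i) | i. i < d}))"

end

theory Submission
  imports Defs "Jordan_Normal_Form.Determinant"
begin

text \<open>
  Necessity: if a face \<open>F\<close> meets fewer than \<open>|F|\<close> of the supports, some nonzero \<open>v\<close>
  supported on \<open>F\<close> is annihilated by every \<open>\<theta>\<^sub>i\<close>. The substitution \<open>x\<^sub>u := v\<^sub>u t\<close> into
  \<open>k[t]\<close> then kills all generators of the ideal (each non-face monomial involves a vertex
  outside \<open>F\<close>) but sends \<open>x\<^sub>w\<^sup>N\<close> to \<open>v\<^sub>w\<^sup>N t\<^sup>N\<close>. In a finite-dimensional quotient \<open>x\<^sub>w\<^sup>N\<close> is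
  congruent to a combination of a fixed finite family, whose images have bounded degree, a
  contradiction for large \<open>N\<close>.

  Sufficiency: by Hall's theorem the vertices of each face can be matched to distinct forms
  \<open>\<theta>\<^sub>i\<close> with \<open>u \<in> S\<^sub>i\<close>. Give \<open>\<theta>\<^sub>i\<close> the coefficient \<open>x\<^bsup>2^c(i,u)\<^esup>\<close> at \<open>u \<in> S\<^sub>i\<close>, where \<open>c\<close> is
  injective. The minor of the matched forms on a face is then a polynomial in \<open>x\<close> in which
  the matching contributes the only term of its degree, as binary expansions are unique; since
  \<open>k\<close> is infinite, \<open>x\<close> can avoid the roots of all these minors. Then on every face the
  restrictions of the \<open>\<theta>\<^sub>i\<close> span all coordinate functionals, so modulo the ideal each
  variable of a face is a combination of variables outside it, and an induction on the support
  puts every monomial of degree \<open>> d\<close> into the ideal.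
\<close>

section \<open>Hall's marriage theorem\<close>

lemma hall_condition_delete:
  fixes T :: "'a \<Rightarrow> 'b set"
  assumes fin: "finite G" "\<And>u. u \<in> G \<Longrightarrow> finite (T u)"
    and surplus: "\<And>H. H \<noteq> {} \<Longrightarrow> H \<subset> G \<Longrightarrow> card H < card (\<Union>(T ` H))"
    and u: "u \<in> G" and H: "H \<subseteq> G - {u}"
  shows "card H \<le> card (\<Union>x\<in>H. T x - {i})"
proof (cases "H = {}")
  case False
  have "finite (\<Union>(T ` H))"
    using fin H by (meson Diff_subset finite_UN_I finite_subset subset_iff)
  moreover have "card H < card (\<Union>(T ` H))"
    using surplus False H u by blast
  moreover have "(\<Union>x\<in>H. T x - {i}) = \<Union>(T ` H) - {i}" by blast
  ultimately show ?thesis by (auto simp: card_Diff_singleton_if)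
qed simp

lemma hall_condition_contract:
  fixes T :: "'a \<Rightarrow> 'b set"
  assumes fin: "finite G" "\<And>u. u \<in> G \<Longrightarrow> finite (T u)"
    and hall: "\<And>H. H \<subseteq> G \<Longrightarrow> card H \<le> card (\<Union>(T ` H))"
    and H: "H \<subseteq> G" and critical: "card (\<Union>(T ` H)) = card H"
    and K: "K \<subseteq> G - H"
  shows "card K \<le> card (\<Union>x\<in>K. T x - \<Union>(T ` H))"
proof -
  have KH: "K \<union> H \<subseteq> G" using H K by blast
  then have fin_KH: "finite (K \<union> H)" using fin(1) by (rule finite_subset)
  have fin_UH: "finite (\<Union>(T ` H))"
    using fin H by (meson finite_UN_I finite_subset subsetD)
  have "(\<Union>x\<in>K. T x - \<Union>(T ` H)) = \<Union>(T ` (K \<union> H)) - \<Union>(T ` H)" by blast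
  then have "card (\<Union>x\<in>K. T x - \<Union>(T ` H)) = card (\<Union>(T ` (K \<union> H))) - card H"
    using fin_UH critical by (simp add: card_Diff_subset)
  moreover have "card (K \<union> H) = card K + card H"
    using K fin_KH by (subst card_Un_disjoint) auto
  moreover have "card (K \<union> H) \<le> card (\<Union>(T ` (K \<union> H)))"
    using hall[OF KH] .
  ultimately show ?thesis by linarith
qed

theorem hall_marriage:
  fixes T :: "'a \<Rightarrow> 'b set"
  assumes "finite G" "\<And>u. u \<in> G \<Longrightarrow> finite (T u)"
    and "\<And>H. H \<subseteq> G \<Longrightarrow> card H \<le> card (\<Union>(T ` H))"
  shows "\<exists>f. inj_on f G \<and> (\<forall>u\<in>G. f u \<in> T u)"
  using assms
proof (induction "card G" arbitrary: G T rule: less_induct)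
  case less
  note fin = less.prems(1,2) and hall = less.prems(3)
  consider "G = {}"
    | (critical) H where "H \<noteq> {}" "H \<subset> G" "card (\<Union>(T ` H)) = card H"
    | (surplus) "G \<noteq> {}" "\<And>H. H \<noteq> {} \<Longrightarrow> H \<subset> G \<Longrightarrow> card H < card (\<Union>(T ` H))"
    using hall by (metis le_neq_implies_less psubset_imp_subset)
  then show ?case
  proof cases
    case surplus
    then obtain u where u: "u \<in> G" by blast
    have "card {u} \<le> card (T u)" using hall[of "{u}"] u by simp
    then obtain i where i: "i \<in> T u" using fin u by fastforce
    have "\<exists>f. inj_on f (G - {u}) \<and> (\<forall>x\<in>G - {u}. f x \<in> T x - {i})"
      using fin card_Diff1_less[OF fin(1) u] hall_condition_delete[OF fin surplus(2) u]
      by (intro less.hyps) auto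
    then obtain f where f: "inj_on f (G - {u})" "\<forall>x\<in>G - {u}. f x \<in> T x - {i}" by blast
    have "inj_on (f(u := i)) G"
      using f u by (subst insert_Diff[OF u, symmetric]) (auto simp: inj_on_def)
    then show ?thesis using f i by auto
  next
    case critical
    have fin_H: "finite H" using critical fin by (auto intro: finite_subset)
    have "\<exists>f. inj_on f H \<and> (\<forall>x\<in>H. f x \<in> T x)"
      using critical fin_H fin hall by (intro less.hyps) (auto simp: psubset_card_mono)
    then obtain f1 where f1: "inj_on f1 H" "\<forall>x\<in>H. f1 x \<in> T x" by blast
    have "\<exists>f. inj_on f (G - H) \<and> (\<forall>x\<in>G - H. f x \<in> T x - \<Union>(T ` H))"
      using critical fin hall_condition_contract[OF fin hall _ critical(3)]
      by (intro less.hyps) (auto intro!: psubset_card_mono)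
    then obtain f2 where f2: "inj_on f2 (G - H)" "\<forall>x\<in>G - H. f2 x \<in> T x - \<Union>(T ` H)" by blast
    define f where "f x = (if x \<in> H then f1 x else f2 x)" for x
    have "inj_on f G"
      using f1 f2 unfolding f_def inj_on_def by (metis DiffD2 DiffI UN_I)
    moreover have "\<forall>x\<in>G. f x \<in> T x" using f1 f2 unfolding f_def by auto
    ultimately show ?thesis by blast
  qed auto
qed

section \<open>Polynomials, ideals and substitution\<close>

lemma poly_mapping_sum_single:
  "(\<Sum>m\<in>Poly_Mapping.keys p. Poly_Mapping.single m (Poly_Mapping.lookup p m)) = p"
    (is "?sum = p")
proof (rule poly_mapping_eqI)
  fix k
  have "(\<Sum>m\<in>Poly_Mapping.keys p. Poly_Mapping.lookup p m when m = k) = Poly_Mapping.lookup p k"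
    unfolding when_def by (simp add: in_keys_iff)
  then show "Poly_Mapping.lookup ?sum k = Poly_Mapping.lookup p k"
    by (simp add: lookup_sum lookup_single)
qed

lemma poly_ring_single: "Poly_Mapping.keys m \<subseteq> V \<Longrightarrow> Poly_Mapping.single m c \<in> poly_ring V"
  unfolding poly_ring_def by simp

lemma poly_ring_add: "p \<in> poly_ring V \<Longrightarrow> q \<in> poly_ring V \<Longrightarrow> p + q \<in> poly_ring V"
  using keys_add[of p q] unfolding poly_ring_def by blast

lemma poly_ring_mult:
  assumes "p \<in> poly_ring V" "q \<in> poly_ring V"
  shows "p * q \<in> poly_ring V"
  unfolding poly_ring_def
proof (intro CollectI ballI)
  fix m assume "m \<in> Poly_Mapping.keys (p * q)"
  then obtain a b where "m = a + b" "a \<in> Poly_Mapping.keys p" "b \<in> Poly_Mapping.keys q"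
    using keys_mult by blast
  then show "Poly_Mapping.keys m \<subseteq> V"
    using assms keys_add[of a b] unfolding poly_ring_def by blast
qed

lemma poly_ring_zero: "0 \<in> poly_ring V"
  unfolding poly_ring_def by simp

lemma poly_ring_one: "1 \<in> poly_ring V"
  unfolding poly_ring_def by simp

lemma poly_ring_const: "const c \<in> poly_ring V"
  unfolding const_def by (simp add: poly_ring_single)

lemma poly_ring_var: "w \<in> V \<Longrightarrow> var w \<in> poly_ring V"
  unfolding var_def by (simp add: poly_ring_single)

lemma poly_ring_power: "p \<in> poly_ring V \<Longrightarrow> p ^ n \<in> poly_ring V"
  by (induction n) (auto intro: poly_ring_mult poly_ring_one)

lemma ideal_genI:
  "finite A \<Longrightarrow> A \<subseteq> G \<Longrightarrow> \<forall>g\<in>A. q g \<in> R \<Longrightarrow> x = (\<Sum>g\<in>A. q g * g) \<Longrightarrow> x \<in> ideal_gen R G"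
  unfolding ideal_gen_def by blast

lemma ideal_gen_generator: "g \<in> G \<Longrightarrow> g \<in> ideal_gen (poly_ring V) G"
  by (rule ideal_genI[of "{g}" _ "\<lambda>_. 1"]) (auto simp: poly_ring_one)

lemma ideal_gen_zero: "0 \<in> ideal_gen R G"
  by (rule ideal_genI[of "{}"]) auto

lemma ideal_gen_add:
  assumes "x \<in> ideal_gen (poly_ring V) G" "y \<in> ideal_gen (poly_ring V) G"
  shows "x + y \<in> ideal_gen (poly_ring V) G"
proof -
  obtain A q where A: "x = (\<Sum>g\<in>A. q g * g)" "finite A" "A \<subseteq> G" "\<forall>g\<in>A. q g \<in> poly_ring V"
    using assms(1) unfolding ideal_gen_def by blast
  obtain B r where B: "y = (\<Sum>g\<in>B. r g * g)" "finite B" "B \<subseteq> G" "\<forall>g\<in>B. r g \<in> poly_ring V"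
    using assms(2) unfolding ideal_gen_def by blast
  define s where "s g = (if g \<in> A then q g else 0) + (if g \<in> B then r g else 0)" for g
  have "x = (\<Sum>g\<in>A \<union> B. (if g \<in> A then q g else 0) * g)"
    unfolding A(1) using A B by (intro sum.mono_neutral_cong_left) auto
  moreover have "y = (\<Sum>g\<in>A \<union> B. (if g \<in> B then r g else 0) * g)"
    unfolding B(1) using A B by (intro sum.mono_neutral_cong_left) auto
  ultimately have "x + y = (\<Sum>g\<in>A \<union> B. s g * g)"
    unfolding s_def distrib_right sum.distrib by simp
  moreover have "\<forall>g\<in>A \<union> B. s g \<in> poly_ring V"
    unfolding s_def using A B by (auto intro!: poly_ring_add poly_ring_zero)
  ultimately show ?thesis
    using A B by (intro ideal_genI[of "A \<union> B"]) auto
qed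

lemma ideal_gen_mult:
  assumes "r \<in> poly_ring V" "x \<in> ideal_gen (poly_ring V) G"
  shows "r * x \<in> ideal_gen (poly_ring V) G"
proof -
  obtain A q where A: "x = (\<Sum>g\<in>A. q g * g)" "finite A" "A \<subseteq> G" "\<forall>g\<in>A. q g \<in> poly_ring V"
    using assms(2) unfolding ideal_gen_def by blast
  have "r * x = (\<Sum>g\<in>A. (r * q g) * g)"
    unfolding A(1) sum_distrib_left by (simp add: mult.assoc)
  moreover have "\<forall>g\<in>A. r * q g \<in> poly_ring V"
    using A assms(1) by (auto intro: poly_ring_mult)
  ultimately show ?thesis
    using A by (intro ideal_genI[of A]) auto
qed

lemma ideal_gen_diff:
  assumes "x \<in> ideal_gen (poly_ring V) G" "y \<in> ideal_gen (poly_ring V) G"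
  shows "x - y \<in> ideal_gen (poly_ring V) G"
  using ideal_gen_add[OF assms(1) ideal_gen_mult[OF poly_ring_const[of "-1"] assms(2)]]
  by (simp add: const_def single_uminus)

lemma ideal_gen_sum:
  "(\<And>x. x \<in> A \<Longrightarrow> f x \<in> ideal_gen (poly_ring V) G) \<Longrightarrow> sum f A \<in> ideal_gen (poly_ring V) G"
  by (induction A rule: infinite_finite_induct) (auto intro: ideal_gen_add ideal_gen_zero)

interpretation const: comm_ring_hom "const :: 'k::comm_ring_1 \<Rightarrow> ('v, 'k) mpoly"
  by unfold_locales (auto simp: const_def single_add mult_single simp flip: single_one)

lemma const_mult_single: "const a * Poly_Mapping.single m c = Poly_Mapping.single m (a * c)"
  unfolding const_def by (simp add: mult_single)

lemma var_mult_single: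
  "var w * Poly_Mapping.single m c = Poly_Mapping.single (m + Poly_Mapping.single w 1) c"
  unfolding var_def by (simp add: mult_single add.commute)

lemma monom_set_eq_single:
  "finite F \<Longrightarrow> monom_set F = Poly_Mapping.single (\<Sum>w\<in>F. Poly_Mapping.single w 1) 1"
  unfolding monom_set_def var_def
  by (induction F rule: finite_induct) (auto simp: mult_single simp flip: single_one)

definition eval_monomial :: "('v \<Rightarrow> 'a::comm_semiring_1) \<Rightarrow> ('v \<Rightarrow>\<^sub>0 nat) \<Rightarrow> 'a" where
  "eval_monomial y m = (\<Prod>w\<in>Poly_Mapping.keys m. y w ^ Poly_Mapping.lookup m w)"

definition eval_mpoly :: "('v \<Rightarrow> 'k::comm_ring_1 poly) \<Rightarrow> ('v, 'k) mpoly \<Rightarrow> 'k poly" where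
  "eval_mpoly y p = (\<Sum>m\<in>Poly_Mapping.keys p. smult (Poly_Mapping.lookup p m) (eval_monomial y m))"

lemma eval_monomial_superset:
  "finite K \<Longrightarrow> Poly_Mapping.keys m \<subseteq> K \<Longrightarrow> eval_monomial y m = (\<Prod>w\<in>K. y w ^ Poly_Mapping.lookup m w)"
  unfolding eval_monomial_def by (rule prod.mono_neutral_left) (auto simp: in_keys_iff)

lemma eval_monomial_add: "eval_monomial y (m1 + m2) = eval_monomial y m1 * eval_monomial y m2"
proof -
  let ?K = "Poly_Mapping.keys m1 \<union> Poly_Mapping.keys m2"
  have "eval_monomial y (m1 + m2) = (\<Prod>w\<in>?K. y w ^ Poly_Mapping.lookup (m1 + m2) w)"
    using keys_add[of m1 m2] by (intro eval_monomial_superset) auto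
  also have "\<dots> = (\<Prod>w\<in>?K. y w ^ Poly_Mapping.lookup m1 w) * (\<Prod>w\<in>?K. y w ^ Poly_Mapping.lookup m2 w)"
    unfolding lookup_add power_add prod.distrib ..
  also have "\<dots> = eval_monomial y m1 * eval_monomial y m2"
    by (subst (1 2) eval_monomial_superset[of ?K]) auto
  finally show ?thesis .
qed

lemma eval_mpoly_superset:
  "finite K \<Longrightarrow> Poly_Mapping.keys p \<subseteq> K \<Longrightarrow>
    eval_mpoly y p = (\<Sum>m\<in>K. smult (Poly_Mapping.lookup p m) (eval_monomial y m))"
  unfolding eval_mpoly_def by (rule sum.mono_neutral_left) (auto simp: in_keys_iff)

lemma eval_mpoly_add: "eval_mpoly y (p + q) = eval_mpoly y p + eval_mpoly y q"
proof -
  let ?K = "Poly_Mapping.keys p \<union> Poly_Mapping.keys q"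
  have "eval_mpoly y (p + q) = (\<Sum>m\<in>?K. smult (Poly_Mapping.lookup (p + q) m) (eval_monomial y m))"
    using keys_add[of p q] by (intro eval_mpoly_superset) auto
  also have "\<dots> = (\<Sum>m\<in>?K. smult (Poly_Mapping.lookup p m) (eval_monomial y m))
      + (\<Sum>m\<in>?K. smult (Poly_Mapping.lookup q m) (eval_monomial y m))"
    unfolding lookup_add smult_add_left sum.distrib ..
  also have "\<dots> = eval_mpoly y p + eval_mpoly y q"
    by (subst (1 2) eval_mpoly_superset[of ?K]) auto
  finally show ?thesis .
qed

lemma eval_mpoly_sum: "eval_mpoly y (\<Sum>i\<in>A. f i) = (\<Sum>i\<in>A. eval_mpoly y (f i))"
  by (induction A rule: infinite_finite_induct) (auto simp: eval_mpoly_add eval_mpoly_def[of y 0])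

lemma eval_mpoly_single: "eval_mpoly y (Poly_Mapping.single m c) = smult c (eval_monomial y m)"
  unfolding eval_mpoly_def by auto

lemma eval_mpoly_mult: "eval_mpoly y (p * q) = eval_mpoly y p * eval_mpoly y q"
proof -
  let ?s = "\<lambda>p m. Poly_Mapping.single m (Poly_Mapping.lookup p m)"
  have "p * q = (\<Sum>m\<in>Poly_Mapping.keys p. \<Sum>m'\<in>Poly_Mapping.keys q. ?s p m * ?s q m')"
    by (subst (1 2) poly_mapping_sum_single[symmetric]) (rule sum_product)
  then have "eval_mpoly y (p * q) = (\<Sum>m\<in>Poly_Mapping.keys p. \<Sum>m'\<in>Poly_Mapping.keys q.
      smult (Poly_Mapping.lookup p m * Poly_Mapping.lookup q m') (eval_monomial y (m + m')))"
    by (simp add: eval_mpoly_sum eval_mpoly_single mult_single)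
  also have "\<dots> = eval_mpoly y p * eval_mpoly y q"
    unfolding eval_mpoly_def sum_product by (simp add: eval_monomial_add mult_ac)
  finally show ?thesis .
qed

interpretation eval_mpoly: comm_ring_hom "eval_mpoly y"
proof
  show "eval_mpoly y 1 = 1"
    by (simp add: eval_monomial_def eval_mpoly_single flip: single_one)
qed (simp_all add: eval_mpoly_add eval_mpoly_mult eval_mpoly_def[of y 0])

lemma eval_mpoly_const: "eval_mpoly y (const c) = [:c:]"
  unfolding const_def eval_mpoly_single by (simp add: eval_monomial_def)

lemma eval_mpoly_var: "eval_mpoly y (var w) = y w"
  unfolding var_def eval_mpoly_single by (simp add: eval_monomial_def)

lemma eval_mpoly_ideal_gen:
  assumes "\<forall>g\<in>G. eval_mpoly y g = 0" "p \<in> ideal_gen R G"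
  shows "eval_mpoly y p = 0"
proof -
  obtain A q where "p = (\<Sum>g\<in>A. q g * g)" "A \<subseteq> G"
    using assms(2) unfolding ideal_gen_def by blast
  then show ?thesis
    using assms(1) by (auto simp: eval_mpoly.hom_sum eval_mpoly.hom_mult intro!: sum.neutral)
qed

lemma fin_dim_quot_eval_var_constant:
  fixes y :: "'v \<Rightarrow> 'k::field poly"
  assumes fin: "fin_dim_quot (poly_ring V) (ideal_gen (poly_ring V) G)"
    and vanish: "\<forall>g\<in>G. eval_mpoly y g = 0" and w: "w \<in> V"
  shows "degree (y w) = 0"
proof (rule ccontr)
  assume nonconst: "degree (y w) \<noteq> 0"
  obtain B where B: "finite B" "B \<subseteq> poly_ring V"
    and span: "\<forall>p\<in>poly_ring V. \<exists>c. p - (\<Sum>b\<in>B. const (c b) * b) \<in> ideal_gen (poly_ring V) G"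
    using fin unfolding fin_dim_quot_def by blast
  define N where "N = Suc (\<Sum>b\<in>B. degree (eval_mpoly y b))"
  obtain c where "var w ^ N - (\<Sum>b\<in>B. const (c b) * b) \<in> ideal_gen (poly_ring V) G"
    using span poly_ring_power[OF poly_ring_var[OF w]] by blast
  then have "eval_mpoly y (var w ^ N - (\<Sum>b\<in>B. const (c b) * b)) = 0"
    by (rule eval_mpoly_ideal_gen[OF vanish])
  then have "y w ^ N = (\<Sum>b\<in>B. smult (c b) (eval_mpoly y b))"
    by (simp add: eval_mpoly.hom_minus eval_mpoly.hom_power eval_mpoly.hom_sum eval_mpoly.hom_mult
        eval_mpoly_var eval_mpoly_const)
  moreover have "degree (\<Sum>b\<in>B. smult (c b) (eval_mpoly y b)) < N"
  proof (rule degree_sum_less)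
    fix b assume "b \<in> B"
    then have "degree (eval_mpoly y b) < N"
      using member_le_sum[of b B "\<lambda>b. degree (eval_mpoly y b)"] B(1) unfolding N_def by simp
    then show "degree (smult (c b) (eval_mpoly y b)) < N"
      by (meson degree_smult_le le_less_trans)
  qed (simp add: N_def)
  moreover have "N \<le> degree (y w ^ N)"
    using nonconst by (cases "y w = 0") (simp_all add: degree_power_eq)
  ultimately show False by simp
qed

section \<open>Necessity of the face condition\<close>

lemma underdetermined_system_nontrivial_solution:
  fixes a :: "'i \<Rightarrow> 'v \<Rightarrow> 'k::field"
  assumes fin: "finite F" "finite I" and less: "card I < card F"
  shows "\<exists>v. (\<forall>u. u \<notin> F \<longrightarrow> v u = 0) \<and> (\<exists>w\<in>F. v w \<noteq> 0) \<and> (\<forall>i\<in>I. (\<Sum>u\<in>F. a i u * v u) = 0)"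
proof -
  define n where "n = card F"
  define m where "m = card I"
  obtain g where g: "bij_betw g {0..<n} F" using ex_bij_betw_nat_finite[OF fin(1)] n_def by auto
  obtain h where h: "bij_betw h {0..<m} I" using ex_bij_betw_nat_finite[OF fin(2)] m_def by auto
  have "m < n" using less m_def n_def by simp
  \<comment> \<open>pad the \<open>m\<close> equations with zero rows to a singular \<open>n \<times> n\<close> system\<close>
  define A where "A = mat n n (\<lambda>(j, l). if j < m then a (h j) (g l) else 0)"
  have A: "A \<in> carrier_mat n n" unfolding A_def by simp
  have "det A = 0"
    unfolding det_def'[OF A]
  proof (rule sum.neutral, rule ballI)
    fix p assume "p \<in> {p. p permutes {0..<n}}"
    then have "A $$ (n - 1, p (n - 1)) = 0" and "n - 1 \<in> {0..<n}"
      using \<open>m < n\<close> unfolding A_def by (auto simp: permutes_in_image)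
    then have "(\<Prod>j=0..<n. A $$ (j, p j)) = 0"
      by (intro prod_zero) auto
    then show "signof p * (\<Prod>j=0..<n. A $$ (j, p j)) = 0"
      by simp
  qed
  then obtain x where x: "x \<in> carrier_vec n" "x \<noteq> 0\<^sub>v n" "A *\<^sub>v x = 0\<^sub>v n"
    using det_0_iff_vec_prod_zero_field[OF A] by blast
  obtain l0 where l0: "l0 < n" "x $ l0 \<noteq> 0"
    using x(1,2) by (auto simp: vec_eq_iff)
  define v where "v u = (if u \<in> F then x $ (inv_into {0..<n} g u) else 0)" for u
  have g_in: "g l \<in> F" and v_g: "v (g l) = x $ l" if "l < n" for l
    using g that by (auto simp: v_def bij_betw_def)
  have "(\<Sum>u\<in>F. a i u * v u) = 0" if i: "i \<in> I" for i
  proof -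
    obtain j where j: "j < m" "h j = i" using h i by (auto simp: bij_betw_def image_iff)
    have "(\<Sum>u\<in>F. a i u * v u) = (\<Sum>l\<in>{0..<n}. a i (g l) * v (g l))"
      using sum.reindex_bij_betw[OF g, of "\<lambda>u. a i u * v u"] by simp
    also have "\<dots> = (A *\<^sub>v x) $ j"
      using j \<open>m < n\<close> x(1) v_g by (auto simp: A_def scalar_prod_def intro!: sum.cong)
    finally show ?thesis using x(3) j \<open>m < n\<close> by simp
  qed
  moreover have "\<exists>w\<in>F. v w \<noteq> 0" using l0 v_g g_in by metis
  ultimately show ?thesis
    by (intro exI[of _ v]) (auto simp: v_def)
qed

lemma finite_vertices: "simplicial_complex \<Gamma> \<Longrightarrow> finite (vertices \<Gamma>)"
  unfolding simplicial_complex_def vertices_def by auto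

lemma face_subset_vertices: "F \<in> \<Gamma> \<Longrightarrow> F \<subseteq> vertices \<Gamma>"
  unfolding vertices_def by auto

lemma lsop_no_nonzero_kernel_on_face:
  fixes a :: "nat \<Rightarrow> 'v \<Rightarrow> 'k::field"
  assumes \<Gamma>: "simplicial_complex \<Gamma>" and lsop: "is_lsop \<Gamma> d a" and F: "F \<in> \<Gamma>"
    and v_F: "\<forall>u. u \<notin> F \<longrightarrow> v u = 0" and kernel: "\<forall>i<d. (\<Sum>u\<in>F. a i u * v u) = 0"
  shows "v w = 0"
proof -
  define V where "V = vertices \<Gamma>"
  have fin_V: "finite V" and F_V: "F \<subseteq> V"
    unfolding V_def using finite_vertices[OF \<Gamma>] face_subset_vertices[OF F] by auto
  define y where "y u = monom (v u) 1" for u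
  have "eval_mpoly y (monom_set G) = 0" if "G \<subseteq> V" "G \<notin> \<Gamma>" for G
  proof -
    have "\<not> G \<subseteq> F" using that F \<Gamma> unfolding simplicial_complex_def by blast
    then obtain u where "u \<in> G" "u \<notin> F" by blast
    moreover have "finite G" using that fin_V finite_subset by blast
    ultimately show ?thesis
      unfolding monom_set_def eval_mpoly.hom_prod eval_mpoly_var y_def using v_F by auto
  qed
  moreover have "eval_mpoly y (lin_form V (a i)) = 0" if "i < d" for i
  proof -
    have "eval_mpoly y (lin_form V (a i)) = monom (\<Sum>u\<in>V. a i u * v u) 1"
      by (simp add: lin_form_def eval_mpoly.hom_sum eval_mpoly.hom_mult eval_mpoly_const
          eval_mpoly_var y_def smult_monom monom_sum)
    also have "(\<Sum>u\<in>V. a i u * v u) = (\<Sum>u\<in>F. a i u * v u)"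
      using F_V fin_V v_F by (intro sum.mono_neutral_right) auto
    finally show ?thesis using kernel that by simp
  qed
  ultimately have "degree (y w) = 0" if "w \<in> V"
    using lsop that unfolding is_lsop_def V_def[symmetric]
    by (intro fin_dim_quot_eval_var_constant[of V _ y]) auto
  then show "v w = 0"
    using v_F F_V unfolding y_def by (metis degree_monom_eq one_neq_zero subsetD)
qed

lemma lsop_face_card_le:
  fixes a :: "nat \<Rightarrow> 'v \<Rightarrow> 'k::field"
  assumes \<Gamma>: "simplicial_complex \<Gamma>" and lsop: "is_lsop \<Gamma> d a" and F: "F \<in> \<Gamma>"
  shows "card F \<le> card {i. i < d \<and> (\<exists>u\<in>F. a i u \<noteq> 0)}"
proof (rule ccontr)
  let ?I = "{i. i < d \<and> (\<exists>u\<in>F. a i u \<noteq> 0)}"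
  assume "\<not> ?thesis"
  moreover have "finite F"
    using finite_vertices[OF \<Gamma>] face_subset_vertices[OF F] finite_subset by blast
  ultimately obtain v where v_F: "\<forall>u. u \<notin> F \<longrightarrow> v u = 0" and "\<exists>w\<in>F. v w \<noteq> 0"
    and kernel_I: "\<forall>i\<in>?I. (\<Sum>u\<in>F. a i u * v u) = 0"
    using underdetermined_system_nontrivial_solution[of F ?I a] by auto
  moreover have "(\<Sum>u\<in>F. a i u * v u) = 0" if "i < d" for i
    using kernel_I that by (cases "i \<in> ?I") auto
  ultimately show False
    using lsop_no_nonzero_kernel_on_face[OF \<Gamma> lsop F, of v] by blast
qed

section \<open>Monomials of high degree\<close>

abbreviation monomial :: "('v \<Rightarrow>\<^sub>0 nat) \<Rightarrow> ('v, 'k::comm_ring_1) mpoly" where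
  "monomial m \<equiv> Poly_Mapping.single m 1"

definition total_degree :: "('v \<Rightarrow>\<^sub>0 nat) \<Rightarrow> nat" where
  "total_degree m = (\<Sum>w\<in>Poly_Mapping.keys m. Poly_Mapping.lookup m w)"

lemma total_degree_add: "total_degree (m1 + m2) = total_degree m1 + total_degree m2"
  unfolding total_degree_def by (rule setsum_keys_plus_distrib) auto

lemma total_degree_single: "total_degree (Poly_Mapping.single w n) = n"
  unfolding total_degree_def by (cases "n = 0") auto

lemma finite_bounded_total_degree:
  assumes "finite V"
  shows "finite {m :: 'v \<Rightarrow>\<^sub>0 nat. Poly_Mapping.keys m \<subseteq> V \<and> total_degree m \<le> d}"
    (is "finite ?L")
proof -
  have "Poly_Mapping.lookup m w \<le> d" if "m \<in> ?L" for m w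
  proof (cases "w \<in> Poly_Mapping.keys m")
    case True
    then show ?thesis
      using that member_le_sum[of w "Poly_Mapping.keys m" "Poly_Mapping.lookup m"]
      by (simp add: total_degree_def)
  qed (simp add: in_keys_iff)
  then have "Poly_Mapping.lookup ` ?L \<subseteq>
      {f. \<forall>w. (w \<in> V \<longrightarrow> f w \<in> {0..d}) \<and> (w \<notin> V \<longrightarrow> f w = 0)}"
    by (auto simp: in_keys_iff)
  moreover have "finite {f. \<forall>w. (w \<in> V \<longrightarrow> f w \<in> {0..d}) \<and> (w \<notin> V \<longrightarrow> f w = (0::nat))}"
    using finite_set_of_finite_funs[OF assms, of "{0..d}" 0] by simp
  ultimately have "finite (Poly_Mapping.lookup ` ?L)" by (rule finite_subset)
  then show ?thesis
    by (rule finite_imageD) (auto intro: inj_onI poly_mapping_eqI)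
qed

lemma high_degree_terms_in_ideal:
  fixes G :: "('v, 'k::comm_ring_1) mpoly set"
  assumes p: "p \<in> poly_ring V"
    and high: "\<And>m. Poly_Mapping.keys m \<subseteq> V \<Longrightarrow> d < total_degree m \<Longrightarrow>
      monomial m \<in> ideal_gen (poly_ring V) G"
  shows "(\<Sum>m\<in>{m \<in> Poly_Mapping.keys p. d < total_degree m}.
      Poly_Mapping.single m (Poly_Mapping.lookup p m)) \<in> ideal_gen (poly_ring V) G"
proof (rule ideal_gen_sum)
  fix m assume "m \<in> {m \<in> Poly_Mapping.keys p. d < total_degree m}"
  then have "monomial m \<in> ideal_gen (poly_ring V) G"
    using p high unfolding poly_ring_def by auto
  then show "Poly_Mapping.single m (Poly_Mapping.lookup p m) \<in> ideal_gen (poly_ring V) G"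
    using ideal_gen_mult[OF poly_ring_const] const_mult_single by (metis mult.right_neutral)
qed

lemma fin_dim_quot_if_high_degree_monomials:
  fixes G :: "('v, 'k::field) mpoly set"
  assumes fin_V: "finite V"
    and high: "\<And>m. Poly_Mapping.keys m \<subseteq> V \<Longrightarrow> d < total_degree m \<Longrightarrow>
      monomial m \<in> ideal_gen (poly_ring V) G"
  shows "fin_dim_quot (poly_ring V) (ideal_gen (poly_ring V) G)"
proof -
  define L where "L = {m :: 'v \<Rightarrow>\<^sub>0 nat. Poly_Mapping.keys m \<subseteq> V \<and> total_degree m \<le> d}"
  have fin_L: "finite L" unfolding L_def by (rule finite_bounded_total_degree[OF fin_V])
  define mon :: "('v \<Rightarrow>\<^sub>0 nat) \<Rightarrow> ('v, 'k) mpoly" where "mon = monomial"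
  have inj: "inj_on mon L"
    unfolding mon_def by (rule inj_onI) (metis keys_single one_neq_zero singleton_inject)
  have "\<exists>c. p - (\<Sum>b\<in>mon ` L. const (c b) * b) \<in> ideal_gen (poly_ring V) G"
    if p: "p \<in> poly_ring V" for p
  proof -
    let ?term = "\<lambda>m. Poly_Mapping.single m (Poly_Mapping.lookup p m)"
    define c where "c b = Poly_Mapping.lookup p (inv_into L mon b)" for b
    have "(\<Sum>b\<in>mon ` L. const (c b) * b) = (\<Sum>m\<in>L. ?term m)"
      unfolding sum.reindex[OF inj] c_def
      by (intro sum.cong refl) (simp add: inv_into_f_f[OF inj], simp add: mon_def const_mult_single)
    also have "\<dots> = (\<Sum>m\<in>Poly_Mapping.keys p \<inter> L. ?term m)"
      using fin_L by (intro sum.mono_neutral_right) (auto simp: in_keys_iff)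
    finally have low: "(\<Sum>b\<in>mon ` L. const (c b) * b) = (\<Sum>m\<in>Poly_Mapping.keys p \<inter> L. ?term m)" .
    have "p - (\<Sum>b\<in>mon ` L. const (c b) * b)
        = (\<Sum>m\<in>Poly_Mapping.keys p. ?term m) - (\<Sum>m\<in>Poly_Mapping.keys p \<inter> L. ?term m)"
      by (simp add: low poly_mapping_sum_single)
    also have "\<dots> = (\<Sum>m\<in>Poly_Mapping.keys p - L. ?term m)"
      by (subst sum.Int_Diff[OF finite_keys, of _ _ L]) simp
    also have "\<dots> = (\<Sum>m\<in>{m \<in> Poly_Mapping.keys p. d < total_degree m}. ?term m)"
      using p by (intro sum.cong) (auto simp: L_def poly_ring_def)
    also have "\<dots> \<in> ideal_gen (poly_ring V) G"
      by (rule high_degree_terms_in_ideal[OF p high])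
    finally show ?thesis by blast
  qed
  moreover have "mon ` L \<subseteq> poly_ring V"
    unfolding L_def mon_def by (auto intro: poly_ring_single)
  ultimately show ?thesis
    unfolding fin_dim_quot_def using fin_L by blast
qed

lemma monomial_eq_mult_monom_set_keys:
  "\<exists>m'. Poly_Mapping.keys m' \<subseteq> Poly_Mapping.keys m \<and>
     (monomial m :: ('v, 'k::comm_ring_1) mpoly) = monomial m' * monom_set (Poly_Mapping.keys m)"
proof -
  define ind where "ind = (\<Sum>w\<in>Poly_Mapping.keys m. Poly_Mapping.single w (1::nat))"
  have lookup_ind: "Poly_Mapping.lookup ind w = (if w \<in> Poly_Mapping.keys m then 1 else 0)" for w
    unfolding ind_def lookup_sum lookup_single when_def by simp
  have "m = (m - ind) + ind"
    by (rule poly_mapping_eqI) (auto simp: lookup_add lookup_minus lookup_ind in_keys_iff)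
  moreover have "Poly_Mapping.keys (m - ind) \<subseteq> Poly_Mapping.keys m"
    by (auto simp: in_keys_iff lookup_minus)
  ultimately show ?thesis
    by (metis ind_def monom_set_eq_single[OF finite_keys] mult_single mult_1)
qed

lemma split_single_keeping_keys:
  fixes m :: "'v \<Rightarrow>\<^sub>0 nat"
  assumes "2 \<le> Poly_Mapping.lookup m w"
  shows "\<exists>m'. m = m' + Poly_Mapping.single w 1 \<and> Poly_Mapping.keys m' = Poly_Mapping.keys m"
proof (intro exI conjI)
  show "m = (m - Poly_Mapping.single w 1) + Poly_Mapping.single w 1"
    using assms
    by (intro poly_mapping_eqI) (auto simp: lookup_add lookup_minus lookup_single when_def)
  show "Poly_Mapping.keys (m - Poly_Mapping.single w 1) = Poly_Mapping.keys m"
    using assms by (auto simp: in_keys_iff lookup_minus lookup_single when_def)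
qed

lemma monomial_mult_var_in_ideal:
  fixes b :: "'v \<Rightarrow> 'k::comm_ring_1"
  assumes reduce: "var w + (\<Sum>u\<in>U. const (b u) * var u) \<in> ideal_gen (poly_ring V) G"
    and m: "Poly_Mapping.keys m \<subseteq> V"
    and U: "\<And>u. u \<in> U \<Longrightarrow> monomial (m + Poly_Mapping.single u 1) \<in> ideal_gen (poly_ring V) G"
  shows "(monomial (m + Poly_Mapping.single w 1) :: ('v, 'k) mpoly) \<in> ideal_gen (poly_ring V) G"
proof -
  have "monomial (m + Poly_Mapping.single w 1) = monomial m * (var w + (\<Sum>u\<in>U. const (b u) * var u))
      - (\<Sum>u\<in>U. const (b u) * monomial (m + Poly_Mapping.single u 1))"
    by (simp add: distrib_left sum_distrib_left var_mult_single mult.left_commute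
        mult.commute[of "monomial m"])
  also have "\<dots> \<in> ideal_gen (poly_ring V) G"
    using m reduce U
    by (intro ideal_gen_diff ideal_gen_mult ideal_gen_sum poly_ring_single poly_ring_const) auto
  finally show ?thesis .
qed

lemma exponent_ge_2_if_card_keys_less_total_degree:
  fixes m :: "'v \<Rightarrow>\<^sub>0 nat"
  assumes "card (Poly_Mapping.keys m) < total_degree m"
  shows "\<exists>w\<in>Poly_Mapping.keys m. 2 \<le> Poly_Mapping.lookup m w"
proof (rule ccontr)
  assume "\<not> ?thesis"
  then have "total_degree m \<le> card (Poly_Mapping.keys m)"
    using sum_mono[of "Poly_Mapping.keys m" "Poly_Mapping.lookup m" "\<lambda>_. 1"]
    unfolding total_degree_def by force
  then show False using assms by linarith
qed

lemma high_degree_monomials_in_ideal: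
  fixes G :: "('v, 'k::comm_ring_1) mpoly set"
  assumes fin_V: "finite V"
    and small_faces: "\<And>F. F \<in> \<Gamma> \<Longrightarrow> card F \<le> d"
    and nonfaces: "\<And>F. F \<subseteq> V \<Longrightarrow> F \<notin> \<Gamma> \<Longrightarrow> monom_set F \<in> ideal_gen (poly_ring V) G"
    and reduce: "\<And>F w. F \<in> \<Gamma> \<Longrightarrow> w \<in> F \<Longrightarrow>
      \<exists>b. var w + (\<Sum>u\<in>V - F. const (b u) * var u) \<in> ideal_gen (poly_ring V) G"
  shows "Poly_Mapping.keys m \<subseteq> V \<Longrightarrow> d < total_degree m \<Longrightarrow>
    (monomial m :: ('v, 'k) mpoly) \<in> ideal_gen (poly_ring V) G"
proof (induction "card V - card (Poly_Mapping.keys m)" arbitrary: m rule: less_induct)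
  case less
  define F where "F = Poly_Mapping.keys m"
  have F_V: "F \<subseteq> V" and fin_F: "finite F"
    using less.prems unfolding F_def by auto
  show ?case
  proof (cases "F \<in> \<Gamma>")
    case False
    obtain m' where "Poly_Mapping.keys m' \<subseteq> F"
      and "(monomial m :: ('v, 'k) mpoly) = monomial m' * monom_set F"
      using monomial_eq_mult_monom_set_keys[of m, where 'k = 'k] unfolding F_def by (elim exE conjE)
    then show ?thesis
      using F_V nonfaces[OF F_V False] by (metis ideal_gen_mult poly_ring_single subset_trans)
  next
    case True
    \<comment> \<open>some exponent is at least 2, so trading \<open>x\<^sub>w\<close> for variables outside \<open>F\<close>
      enlarges the support\<close>
    have "card F < total_degree m"
      using small_faces[OF True] less.prems(2) by linarith
    then obtain w where w: "w \<in> F" "2 \<le> Poly_Mapping.lookup m w"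
      using exponent_ge_2_if_card_keys_less_total_degree unfolding F_def by blast
    obtain m' where m': "m = m' + Poly_Mapping.single w 1" "Poly_Mapping.keys m' = F"
      using split_single_keeping_keys[OF w(2)] unfolding F_def by blast
    obtain b where b: "var w + (\<Sum>u\<in>V - F. const (b u) * var u) \<in> ideal_gen (poly_ring V) G"
      using reduce[OF True w(1)] by blast
    have "(monomial (m' + Poly_Mapping.single u 1) :: ('v, 'k) mpoly) \<in> ideal_gen (poly_ring V) G"
      if u: "u \<in> V - F" for u
    proof (rule less.hyps)
      have keys: "Poly_Mapping.keys (m' + Poly_Mapping.single u 1) = insert u F"
        using m'(2) by (auto simp: in_keys_iff lookup_add lookup_single when_def split: if_splits)
      show "Poly_Mapping.keys (m' + Poly_Mapping.single u 1) \<subseteq> V"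
        using keys u F_V by auto
      show "card V - card (Poly_Mapping.keys (m' + Poly_Mapping.single u 1))
          < card V - card (Poly_Mapping.keys m)"
        using card_mono[OF fin_V, of "insert u F"] u F_V fin_F
        unfolding keys F_def[symmetric] by auto
      show "d < total_degree (m' + Poly_Mapping.single u 1)"
        using less.prems(2) m'(1) by (simp add: total_degree_add total_degree_single)
    qed
    then show ?thesis
      using monomial_mult_var_in_ideal[OF b] m' F_V by simp
  qed
qed

definition spans_coordinates :: "nat \<Rightarrow> (nat \<Rightarrow> 'v \<Rightarrow> 'k::comm_ring_1) \<Rightarrow> 'v set \<Rightarrow> bool" where
  "spans_coordinates d a F \<longleftrightarrow>
     (\<forall>w\<in>F. \<exists>c. \<forall>u\<in>F. (\<Sum>i<d. c i * a i u) = (if u = w then 1 else 0))"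

lemma coordinate_combination_in_ideal:
  fixes a :: "nat \<Rightarrow> 'v \<Rightarrow> 'k::comm_ring_1"
  assumes fin_V: "finite V" and F_V: "F \<subseteq> V" and w: "w \<in> F"
    and forms: "\<forall>i<d. lin_form V (a i) \<in> ideal_gen (poly_ring V) G"
    and c: "\<forall>u\<in>F. (\<Sum>i<d. c i * a i u) = (if u = w then 1 else 0)"
  shows "var w + (\<Sum>u\<in>V - F. const (\<Sum>i<d. c i * a i u) * var u) \<in> ideal_gen (poly_ring V) G"
proof -
  have "(\<Sum>i<d. const (c i) * lin_form V (a i)) = (\<Sum>u\<in>V. const (\<Sum>i<d. c i * a i u) * var u)"
    unfolding lin_form_def sum_distrib_left const.hom_sum const.hom_mult sum_distrib_right
    by (subst sum.swap) (simp add: mult.assoc)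
  also have "\<dots> = (\<Sum>u\<in>V - F. const (\<Sum>i<d. c i * a i u) * var u)
      + (\<Sum>u\<in>F. const (\<Sum>i<d. c i * a i u) * var u)"
    by (rule sum.subset_diff[OF F_V fin_V])
  also have "(\<Sum>u\<in>F. const (\<Sum>i<d. c i * a i u) * var u)
      = (\<Sum>u\<in>F. if u = w then var u else 0)"
    using c by (intro sum.cong) auto
  also have "\<dots> = var w"
    using w finite_subset[OF F_V fin_V] by simp
  finally have "(\<Sum>i<d. const (c i) * lin_form V (a i))
      = var w + (\<Sum>u\<in>V - F. const (\<Sum>i<d. c i * a i u) * var u)"
    by (simp add: add.commute)
  moreover have "(\<Sum>i<d. const (c i) * lin_form V (a i)) \<in> ideal_gen (poly_ring V) G"
    using forms by (intro ideal_gen_sum ideal_gen_mult poly_ring_const) auto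
  ultimately show ?thesis by simp
qed

lemma lsop_if_spans_coordinates_on_faces:
  fixes a :: "nat \<Rightarrow> 'v \<Rightarrow> 'k::field"
  assumes \<Gamma>: "simplicial_complex \<Gamma>" and small_faces: "\<And>F. F \<in> \<Gamma> \<Longrightarrow> card F \<le> d"
    and spans: "\<And>F. F \<in> \<Gamma> \<Longrightarrow> spans_coordinates d a F"
  shows "is_lsop \<Gamma> d a"
proof -
  define V where "V = vertices \<Gamma>"
  define G :: "('v, 'k) mpoly set" where
    "G = {monom_set F | F. F \<subseteq> V \<and> F \<notin> \<Gamma>} \<union> {lin_form V (a i) | i. i < d}"
  have fin_V: "finite V" unfolding V_def by (rule finite_vertices[OF \<Gamma>])
  have forms: "\<forall>i<d. lin_form V (a i) \<in> ideal_gen (poly_ring V) G"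
    unfolding G_def by (blast intro: ideal_gen_generator)
  have nonfaces: "monom_set F \<in> ideal_gen (poly_ring V) G" if "F \<subseteq> V" "F \<notin> \<Gamma>" for F
    using that unfolding G_def by (blast intro: ideal_gen_generator)
  have reduce: "\<exists>b. var w + (\<Sum>u\<in>V - F. const (b u) * var u) \<in> ideal_gen (poly_ring V) G"
    if F: "F \<in> \<Gamma>" and w: "w \<in> F" for F w
  proof -
    obtain c where c: "\<forall>u\<in>F. (\<Sum>i<d. c i * a i u) = (if u = w then 1 else 0)"
      using spans[OF F] w unfolding spans_coordinates_def by blast
    have "F \<subseteq> V" unfolding V_def by (rule face_subset_vertices[OF F])
    with coordinate_combination_in_ideal[OF fin_V _ w forms c]
    show ?thesis by (intro exI[of _ "\<lambda>u. \<Sum>i<d. c i * a i u"])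
  qed
  have "monomial m \<in> ideal_gen (poly_ring V) G"
    if "Poly_Mapping.keys m \<subseteq> V" "d < total_degree m" for m
    using high_degree_monomials_in_ideal[OF fin_V small_faces nonfaces reduce that] .
  then show ?thesis
    unfolding is_lsop_def V_def[symmetric] G_def[symmetric]
    by (rule fin_dim_quot_if_high_degree_monomials[OF fin_V])
qed

section \<open>Generic coefficients\<close>

lemma bit_sum_power2_iff: "finite A \<Longrightarrow> bit (\<Sum>x\<in>A. (2::nat) ^ x) n \<longleftrightarrow> n \<in> A"
proof (induction A arbitrary: n rule: finite_induct)
  case (insert a A)
  have "bit (2 ^ a + (\<Sum>x\<in>A. (2::nat) ^ x)) n \<longleftrightarrow> n = a \<or> n \<in> A"
    using insert by (subst bit_disjunctive_add_iff) (auto simp: bit_exp_iff)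
  then show ?case using insert by simp
qed simp

lemma sum_power2_inj:
  "finite A \<Longrightarrow> finite B \<Longrightarrow> (\<Sum>x\<in>A. (2::nat) ^ x) = (\<Sum>x\<in>B. 2 ^ x) \<Longrightarrow> A = B"
  by (metis bit_sum_power2_iff subsetI subset_antisym)

lemma permutes_eq_id_if_power2_sums_eq:
  fixes e :: "nat \<Rightarrow> nat \<Rightarrow> nat"
  assumes inj: "inj_on (\<lambda>(j, l). e j l) ({0..<n} \<times> {0..<n})"
    and p: "p permutes {0..<n}"
    and eq: "(\<Sum>j=0..<n. (2::nat) ^ e j (p j)) = (\<Sum>j=0..<n. 2 ^ e j j)"
  shows "p = id"
proof
  fix j
  have p_n: "p j < n" if "j < n" for j
    using p that by (simp add: permutes_in_image)
  have e_eq: "j = j' \<and> l = l'" if "e j l = e j' l'" "j < n" "l < n" "j' < n" "l' < n" for j l j' l'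
    using inj_onD[OF inj, of "(j, l)" "(j', l')"] that by auto
  have inj_p: "inj_on (\<lambda>j. e j (p j)) {0..<n}"
  proof (rule inj_onI)
    fix j j' assume "j \<in> {0..<n}" "j' \<in> {0..<n}" "e j (p j) = e j' (p j')"
    then show "j = j'" using e_eq[of j "p j" j' "p j'"] p_n by simp
  qed
  have inj_id: "inj_on (\<lambda>j. e j j) {0..<n}"
  proof (rule inj_onI)
    fix j j' assume "j \<in> {0..<n}" "j' \<in> {0..<n}" "e j j = e j' j'"
    then show "j = j'" using e_eq[of j j j' j'] by simp
  qed
  have "(\<Sum>x\<in>(\<lambda>j. e j (p j)) ` {0..<n}. (2::nat) ^ x) = (\<Sum>x\<in>(\<lambda>j. e j j) ` {0..<n}. 2 ^ x)"
    using eq by (simp add: sum.reindex[OF inj_p] sum.reindex[OF inj_id])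
  then have images: "(\<lambda>j. e j (p j)) ` {0..<n} = (\<lambda>j. e j j) ` {0..<n}"
    by (rule sum_power2_inj[rotated 2]) auto
  show "p j = id j"
  proof (cases "j < n")
    case True
    then have "e j (p j) \<in> (\<lambda>j. e j (p j)) ` {0..<n}" by simp
    then obtain j' where "j' < n" "e j (p j) = e j' j'"
      unfolding images by auto
    then show ?thesis
      using e_eq[of j "p j" j' j'] p_n[OF True] True by auto
  next
    case False
    then show ?thesis using p by (simp add: permutes_def)
  qed
qed

lemma prod_monom_if:
  "finite A \<Longrightarrow> (\<Prod>j\<in>A. if c j then monom (1::'a::comm_semiring_1) (e j) else 0)
     = (if \<forall>j\<in>A. c j then monom 1 (\<Sum>j\<in>A. e j) else 0)"
  by (induction A rule: finite_induct) (auto simp: mult_monom)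

lemma det_power2_monomial_matrix_nonzero:
  fixes e :: "nat \<Rightarrow> nat \<Rightarrow> nat"
  assumes inj: "inj_on (\<lambda>(j, l). e j l) ({0..<n} \<times> {0..<n})" and diag: "\<And>j. j < n \<Longrightarrow> P j j"
  shows "det (mat n n (\<lambda>(j, l). if P j l then monom (1::'k::comm_ring_1) (2 ^ e j l) else 0)) \<noteq> 0"
    (is "det ?M \<noteq> 0")
proof -
  define E where "E = (\<Sum>j=0..<n. (2::nat) ^ e j j)"
  have "coeff (signof p * (\<Prod>j=0..<n. ?M $$ (j, p j))) E = (if p = id then 1 else 0)"
    if p: "p permutes {0..<n}" for p
  proof -
    have "(\<Prod>j=0..<n. ?M $$ (j, p j)) =
        (\<Prod>j=0..<n. if P j (p j) then monom 1 (2 ^ e j (p j)) else 0)"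
      using p by (intro prod.cong) (auto simp: permutes_in_image)
    moreover have "(\<Sum>j=0..<n. 2 ^ e j (p j)) = E \<Longrightarrow> p = id"
      using permutes_eq_id_if_power2_sums_eq[OF inj p] unfolding E_def by blast
    ultimately show ?thesis
      using diag by (auto simp: prod_monom_if E_def of_int_poly signof_id)
  qed
  then have "coeff (det ?M) E = (\<Sum>p\<in>{p. p permutes {0..<n}}. if p = id then 1 else 0)"
    unfolding det_def'[OF mat_carrier] coeff_sum by (intro sum.cong) simp_all
  also have "\<dots> = 1"
    by (simp add: finite_permutations)
  finally show ?thesis by auto
qed

lemma det_nonzero_row_combination_unit:
  fixes A :: "'k::field mat"
  assumes A: "A \<in> carrier_mat n n" and det: "det A \<noteq> 0" and l0: "l0 < n"
  shows "\<exists>c. \<forall>l<n. (\<Sum>j=0..<n. c j * A $$ (j, l)) = (if l = l0 then 1 else 0)"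
proof -
  obtain B where BA: "B * A = 1\<^sub>m n" and B: "B \<in> carrier_mat n n"
    using det_non_zero_imp_unit[OF A det, of "()"] unfolding Units_def ring_mat_def by auto
  have dims: "dim_row A = n" "dim_col A = n" "dim_row B = n" "dim_col B = n"
    using A B by auto
  have "(\<Sum>j=0..<n. B $$ (l0, j) * A $$ (j, l)) = (if l = l0 then 1 else 0)" if l: "l < n" for l
  proof -
    have "(\<Sum>j=0..<n. B $$ (l0, j) * A $$ (j, l)) = row B l0 \<bullet> col A l"
      unfolding scalar_prod_def using dims l l0 by (intro sum.cong) auto
    also have "\<dots> = (B * A) $$ (l0, l)"
      using dims l l0 by simp
    also have "\<dots> = (if l = l0 then 1 else 0)"
      using BA l l0 by simp
    finally show ?thesis .
  qed
  then show ?thesis by (intro exI[of _ "\<lambda>j. B $$ (l0, j)"]) blast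
qed

lemma spans_coordinates_if_minor_nonzero:
  fixes a :: "nat \<Rightarrow> 'v \<Rightarrow> 'k::field" and n :: nat
  assumes h: "\<And>j. j < n \<Longrightarrow> h j < d" and g: "bij_betw g {0..<n} G"
    and det: "det (mat n n (\<lambda>(j, l). a (h j) (g l))) \<noteq> 0"
  shows "spans_coordinates d a G"
  unfolding spans_coordinates_def
proof
  fix w assume "w \<in> G"
  then obtain l0 where l0: "l0 < n" "g l0 = w"
    using g by (auto simp: bij_betw_def)
  obtain c where c: "\<forall>l<n. (\<Sum>j=0..<n. c j * mat n n (\<lambda>(j, l). a (h j) (g l)) $$ (j, l))
      = (if l = l0 then 1 else 0)"
    using det_nonzero_row_combination_unit[OF mat_carrier det l0(1)] by blast
  have comb: "(\<Sum>j=0..<n. c j * a (h j) (g l)) = (if l = l0 then 1 else 0)" if "l < n" for l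
  proof -
    have "(\<Sum>j=0..<n. c j * a (h j) (g l))
        = (\<Sum>j=0..<n. c j * mat n n (\<lambda>(j, l). a (h j) (g l)) $$ (j, l))"
      using that by (intro sum.cong) auto
    then show ?thesis using c that by simp
  qed
  define c' where "c' i = (\<Sum>j=0..<n. if h j = i then c j else 0)" for i
  have "(\<Sum>i<d. c' i * a i u) = (if u = w then 1 else 0)" if "u \<in> G" for u
  proof -
    obtain l where l: "l < n" "g l = u"
      using g \<open>u \<in> G\<close> by (auto simp: bij_betw_def)
    have "(\<Sum>i<d. c' i * a i u) = (\<Sum>i<d. \<Sum>j=0..<n. if h j = i then c j * a i u else 0)"
      unfolding c'_def sum_distrib_right by (intro sum.cong) auto
    also have "\<dots> = (\<Sum>j=0..<n. \<Sum>i<d. if h j = i then c j * a i u else 0)"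
      by (rule sum.swap)
    also have "\<dots> = (\<Sum>j=0..<n. c j * a (h j) (g l))"
      using h l by (intro sum.cong) auto
    also have "\<dots> = (if l = l0 then 1 else 0)"
      by (rule comb[OF l(1)])
    also have "\<dots> = (if u = w then 1 else 0)"
      using l l0 inj_on_eq_iff[OF bij_betw_imp_inj_on[OF g], of l l0] by auto
    finally show ?thesis .
  qed
  then show "\<exists>c. \<forall>u\<in>G. (\<Sum>i<d. c i * a i u) = (if u = w then 1 else 0)" by blast
qed

lemma matching_into_supports:
  fixes S :: "nat \<Rightarrow> 'v set"
  assumes fin_G: "finite G"
    and hall: "\<And>H. H \<subseteq> G \<Longrightarrow> card H \<le> card {i. i < d \<and> S i \<inter> H \<noteq> {}}"
  shows "\<exists>f. inj_on f G \<and> (\<forall>u\<in>G. f u < d \<and> u \<in> S (f u))"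
proof -
  define T where "T u = {i. i < d \<and> u \<in> S i}" for u
  have "\<exists>f. inj_on f G \<and> (\<forall>u\<in>G. f u \<in> T u)"
  proof (rule hall_marriage[OF fin_G])
    show "finite (T u)" for u unfolding T_def by simp
    show "card H \<le> card (\<Union>(T ` H))" if "H \<subseteq> G" for H
    proof -
      have "\<Union>(T ` H) = {i. i < d \<and> S i \<inter> H \<noteq> {}}" unfolding T_def by blast
      then show ?thesis using hall[OF that] by simp
    qed
  qed
  then show ?thesis unfolding T_def by blast
qed

lemma inj_on_code_pairs:
  assumes code: "inj_on code (D \<times> V)" and f: "inj_on f G" "f ` G \<subseteq> D" and G_V: "G \<subseteq> V"
    and g: "inj_on g N" "g ` N \<subseteq> G"
  shows "inj_on (\<lambda>(j, l). code (f (g j), g l)) (N \<times> N)"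
proof (rule inj_onI, clarsimp)
  fix j l j' l' assume jl: "j \<in> N" "l \<in> N" "j' \<in> N" "l' \<in> N"
    and eq: "code (f (g j), g l) = code (f (g j'), g l')"
  have "(f (g j), g l) \<in> D \<times> V" "(f (g j'), g l') \<in> D \<times> V"
    using jl f(2) g(2) G_V by auto
  then have "f (g j) = f (g j')" "g l = g l'"
    using inj_onD[OF code eq] by auto
  then show "j = j' \<and> l = l'"
    using jl g(2) inj_on_eq_iff[OF f(1)] inj_on_eq_iff[OF g(1)] by (simp add: image_subset_iff)
qed

definition generic_coeffs ::
  "(nat \<Rightarrow> 'v set) \<Rightarrow> (nat \<times> 'v \<Rightarrow> nat) \<Rightarrow> 'k::comm_ring_1 \<Rightarrow> nat \<Rightarrow> 'v \<Rightarrow> 'k"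
  where "generic_coeffs S code x i u = (if u \<in> S i then x ^ 2 ^ code (i, u) else 0)"

lemma generic_coeffs_spans_face:
  fixes S :: "nat \<Rightarrow> 'v set" and code :: "nat \<times> 'v \<Rightarrow> nat"
  assumes code: "inj_on code ({0..<d} \<times> V)" and G_V: "G \<subseteq> V" and fin_G: "finite G"
    and hall: "\<And>H. H \<subseteq> G \<Longrightarrow> card H \<le> card {i. i < d \<and> S i \<inter> H \<noteq> {}}"
  shows "\<exists>Q :: 'k::field poly. Q \<noteq> 0 \<and>
    (\<forall>x. poly Q x \<noteq> 0 \<longrightarrow> spans_coordinates d (generic_coeffs S code x) G)"
proof -
  obtain f where f_inj: "inj_on f G" and f: "\<forall>u\<in>G. f u < d \<and> u \<in> S (f u)"
    using matching_into_supports[OF fin_G hall] by blast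
  define n where "n = card G"
  obtain g where g: "bij_betw g {0..<n} G"
    using ex_bij_betw_nat_finite[OF fin_G] unfolding n_def by blast
  have g_G: "g j \<in> G" if "j < n" for j
    using g that by (auto simp: bij_betw_def)
  define e where "e j l = code (f (g j), g l)" for j l
  have e_inj: "inj_on (\<lambda>(j, l). e j l) ({0..<n} \<times> {0..<n})"
    unfolding e_def using f g G_V
    by (intro inj_on_code_pairs[OF code f_inj]) (auto simp: bij_betw_def)
  define M :: "'k poly mat" where
    "M = mat n n (\<lambda>(j, l). if g l \<in> S (f (g j)) then monom 1 (2 ^ e j l) else 0)"
  have "det M \<noteq> 0"
    unfolding M_def using f g_G by (intro det_power2_monomial_matrix_nonzero[OF e_inj]) auto
  moreover have "spans_coordinates d (generic_coeffs S code x) G" if x: "poly (det M) x \<noteq> 0" for x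
  proof (rule spans_coordinates_if_minor_nonzero[OF _ g])
    show "f (g j) < d" if "j < n" for j
      using f g_G[OF that] by blast
    have "mat n n (\<lambda>(j, l). generic_coeffs S code x (f (g j)) (g l)) = map_mat (\<lambda>q. poly q x) M"
      by (rule eq_matI) (auto simp: M_def generic_coeffs_def e_def poly_monom)
    moreover have "comm_ring_hom (\<lambda>q. poly q x)" by unfold_locales auto
    ultimately show "det (mat n n (\<lambda>(j, l). generic_coeffs S code x (f (g j)) (g l))) \<noteq> 0"
      using x by (simp add: comm_ring_hom.hom_det)
  qed
  ultimately show ?thesis by blast
qed

lemma generic_coeffs_span_all_faces:
  fixes S :: "nat \<Rightarrow> 'v set" and \<Gamma> :: "'v set set"
  assumes inf: "infinite (UNIV :: 'k::field set)" and fin_V: "finite V" and fin_\<Gamma>: "finite \<Gamma>"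
    and faces_V: "\<And>F. F \<in> \<Gamma> \<Longrightarrow> F \<subseteq> V"
    and hall: "\<And>F H. F \<in> \<Gamma> \<Longrightarrow> H \<subseteq> F \<Longrightarrow> card H \<le> card {i. i < d \<and> S i \<inter> H \<noteq> {}}"
  shows "\<exists>a :: nat \<Rightarrow> 'v \<Rightarrow> 'k. (\<forall>i u. a i u \<noteq> 0 \<longleftrightarrow> u \<in> S i) \<and> (\<forall>F\<in>\<Gamma>. spans_coordinates d a F)"
proof -
  obtain code :: "nat \<times> 'v \<Rightarrow> nat" and m where "code ` ({0..<d} \<times> V) = {i. i < m}"
    and code: "inj_on code ({0..<d} \<times> V)"
    using finite_imp_inj_to_nat_seg[OF finite_cartesian_product[OF finite_atLeastLessThan fin_V]]
    by blast
  have "\<forall>F\<in>\<Gamma>. \<exists>Q :: 'k poly. Q \<noteq> 0 \<and>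
      (\<forall>x. poly Q x \<noteq> 0 \<longrightarrow> spans_coordinates d (generic_coeffs S code x) F)"
  proof
    fix F assume F: "F \<in> \<Gamma>"
    have "finite F" using finite_subset[OF faces_V[OF F] fin_V] .
    then show "\<exists>Q :: 'k poly. Q \<noteq> 0 \<and>
        (\<forall>x. poly Q x \<noteq> 0 \<longrightarrow> spans_coordinates d (generic_coeffs S code x) F)"
      by (rule generic_coeffs_spans_face[OF code faces_V[OF F]]) (rule hall[OF F])
  qed
  from bchoice[OF this] obtain Q :: "'v set \<Rightarrow> 'k poly" where Q: "\<forall>F\<in>\<Gamma>. Q F \<noteq> 0 \<and>
      (\<forall>x. poly (Q F) x \<noteq> 0 \<longrightarrow> spans_coordinates d (generic_coeffs S code x) F)"
    by blast
  have "finite (\<Union>F\<in>\<Gamma>. {x. poly (Q F) x = 0})"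
    using fin_\<Gamma> Q poly_roots_finite by (intro finite_UN_I) auto
  then obtain x :: 'k where x: "x \<notin> insert 0 (\<Union>F\<in>\<Gamma>. {x. poly (Q F) x = 0})"
    using ex_new_if_finite[OF inf] by (metis finite_insert)
  have "\<forall>i u. generic_coeffs S code x i u \<noteq> 0 \<longleftrightarrow> u \<in> S i"
    using x by (simp add: generic_coeffs_def)
  moreover have "\<forall>F\<in>\<Gamma>. spans_coordinates d (generic_coeffs S code x) F"
    using Q x by blast
  ultimately show ?thesis by (intro exI[of _ "generic_coeffs S code x"] conjI)
qed

lemma face_condition_imp_lsop:
  fixes S :: "nat \<Rightarrow> 'v set" and \<Gamma> :: "'v set set"
  assumes inf: "infinite (UNIV :: 'k::field set)" and \<Gamma>: "simplicial_complex \<Gamma>"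
    and small_faces: "\<And>F. F \<in> \<Gamma> \<Longrightarrow> card F \<le> d"
    and hall: "\<And>F. F \<in> \<Gamma> \<Longrightarrow> card F \<le> card {i. i < d \<and> S i \<inter> F \<noteq> {}}"
  shows "\<exists>a :: nat \<Rightarrow> 'v \<Rightarrow> 'k. is_lsop \<Gamma> d a \<and> (\<forall>i u. a i u \<noteq> 0 \<longleftrightarrow> u \<in> S i)"
proof -
  have fin_\<Gamma>: "finite \<Gamma>" using \<Gamma> unfolding simplicial_complex_def by blast
  have "\<exists>a :: nat \<Rightarrow> 'v \<Rightarrow> 'k. (\<forall>i u. a i u \<noteq> 0 \<longleftrightarrow> u \<in> S i) \<and> (\<forall>F\<in>\<Gamma>. spans_coordinates d a F)"
  proof (rule generic_coeffs_span_all_faces[OF inf finite_vertices[OF \<Gamma>] fin_\<Gamma>])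
    show "F \<subseteq> vertices \<Gamma>" if "F \<in> \<Gamma>" for F
      using face_subset_vertices[OF that] .
    show "card H \<le> card {i. i < d \<and> S i \<inter> H \<noteq> {}}" if "F \<in> \<Gamma>" "H \<subseteq> F" for F H
    proof -
      have "H \<in> \<Gamma>" using \<Gamma> that unfolding simplicial_complex_def by blast
      then show ?thesis by (rule hall)
    qed
  qed
  then obtain a :: "nat \<Rightarrow> 'v \<Rightarrow> 'k" where a_S: "\<forall>i u. a i u \<noteq> 0 \<longleftrightarrow> u \<in> S i"
    and spans: "\<forall>F\<in>\<Gamma>. spans_coordinates d a F"
    by blast
  have "is_lsop \<Gamma> d a"
    using spans by (intro lsop_if_spans_coordinates_on_faces[OF \<Gamma> small_faces]) auto
  with a_S show ?thesis by blast
qed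

theorem lemma2p2:
  fixes \<Gamma> :: "'v set set" and d :: nat and S :: "nat \<Rightarrow> 'v set"
  assumes "infinite (UNIV :: 'k::field set)"
    and "simplicial_complex \<Gamma>"
    and "face_card_max \<Gamma> = d"
    and "\<forall>i<d. S i \<subseteq> vertices \<Gamma>"
  shows "(\<exists>a :: nat \<Rightarrow> 'v \<Rightarrow> 'k. is_lsop \<Gamma> d a \<and> (\<forall>i<d. supp (vertices \<Gamma>) (a i) = S i))
     \<longleftrightarrow> (\<forall>F\<in>\<Gamma>. card {i. i < d \<and> S i \<inter> F \<noteq> {}} \<ge> card F)"
proof
  assume "\<exists>a :: nat \<Rightarrow> 'v \<Rightarrow> 'k. is_lsop \<Gamma> d a \<and> (\<forall>i<d. supp (vertices \<Gamma>) (a i) = S i)"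
  then obtain a :: "nat \<Rightarrow> 'v \<Rightarrow> 'k" where lsop: "is_lsop \<Gamma> d a"
    and supp: "\<forall>i<d. supp (vertices \<Gamma>) (a i) = S i" by blast
  show "\<forall>F\<in>\<Gamma>. card {i. i < d \<and> S i \<inter> F \<noteq> {}} \<ge> card F"
  proof
    fix F assume F: "F \<in> \<Gamma>"
    have "{i. i < d \<and> (\<exists>u\<in>F. a i u \<noteq> 0)} = {i. i < d \<and> S i \<inter> F \<noteq> {}}"
      using supp face_subset_vertices[OF F] unfolding supp_def by blast
    then show "card {i. i < d \<and> S i \<inter> F \<noteq> {}} \<ge> card F"
      using lsop_face_card_le[OF assms(2) lsop F] by simp
  qed
next
  assume "\<forall>F\<in>\<Gamma>. card {i. i < d \<and> S i \<inter> F \<noteq> {}} \<ge> card F"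
  moreover have "card F \<le> d" if "F \<in> \<Gamma>" for F
    using that assms(2,3) unfolding simplicial_complex_def face_card_max_def by (auto intro: Max_ge)
  ultimately obtain a :: "nat \<Rightarrow> 'v \<Rightarrow> 'k" where "is_lsop \<Gamma> d a" and "\<forall>i u. a i u \<noteq> 0 \<longleftrightarrow> u \<in> S i"
    using face_condition_imp_lsop[OF assms(1,2)] by blast
  moreover have "\<forall>i<d. supp (vertices \<Gamma>) (a i) = S i"
    using \<open>\<forall>i u. a i u \<noteq> 0 \<longleftrightarrow> u \<in> S i\<close> assms(4) unfolding supp_def by blast
  ultimately show "\<exists>a :: nat \<Rightarrow> 'v \<Rightarrow> 'k. is_lsop \<Gamma> d a \<and> (\<forall>i<d. supp (vertices \<Gamma>) (a i) = S i)"
    by blast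
qed

end
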